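(* Let $U$ be an infinite complex matrix (rows and columns indexed by positive integers) with finitely many nonzero entries in every row and every column. Then $U$ is unitary (i.e. $UU^*=U^*U=I$) if and only if $U^*U=I$ and every row of $U$ has norm $1$.
   Context: $U^*$ denotes the Hermitian conjugate of $U$; $I$ is the infinite identity matrix; products of infinite matrices are defined entrywise by $(XY)_{ij}=\sum_k x_{ik}y_{kj}$. *)

theory Defs
  imports "HOL-Analysis.Analysis"
begin

text \<open>Infinite complex matrices, rows and columns indexed by positive integers.
  We use functions nat => nat => complex and only ever look at indices >= 1;
  entries at index 0 are ignored.\<close>

type_synonym imat = "nat \<Rightarrow> nat \<Rightarrow> complex"

definition pos_idx :: "nat set" where "pos_idx = {1..}"

definition imat_mult :: "imat \<Rightarrow> imat \<Rightarrow> imat" where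
  "imat_mult X Y = (\<lambda>i j. \<Sum>\<^sub>\<infinity>k\<in>pos_idx. X i k * Y k j)"

definition imat_adj :: "imat \<Rightarrow> imat" where
  "imat_adj U = (\<lambda>i j. cnj (U j i))"

definition imat_id :: imat where
  "imat_id = (\<lambda>i j. if i = j then 1 else 0)"

definition imat_eq :: "imat \<Rightarrow> imat \<Rightarrow> bool" where
  "imat_eq X Y \<longleftrightarrow> (\<forall>i\<in>pos_idx. \<forall>j\<in>pos_idx. X i j = Y i j)"

definition row_finite :: "imat \<Rightarrow> bool" where
  "row_finite U \<longleftrightarrow> (\<forall>i\<in>pos_idx. finite {j\<in>pos_idx. U i j \<noteq> 0})"

definition col_finite :: "imat \<Rightarrow> bool" where
  "col_finite U \<longleftrightarrow> (\<forall>j\<in>pos_idx. finite {i\<in>pos_idx. U i j \<noteq> 0})"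

definition row_norm :: "imat \<Rightarrow> nat \<Rightarrow> real" where
  "row_norm U i = sqrt (\<Sum>\<^sub>\<infinity>j\<in>pos_idx. (cmod (U i j))\<^sup>2)"

definition unitary :: "imat \<Rightarrow> bool" where
  "unitary U \<longleftrightarrow> imat_eq (imat_mult U (imat_adj U)) imat_id
               \<and> imat_eq (imat_mult (imat_adj U) U) imat_id"

end

theory Submission
  imports Defs
begin

text \<open>Fix a row \<open>r\<close> of \<open>U\<close> and let \<open>w = U r\<^sup>*\<close>, the corresponding column of \<open>U U\<^sup>*\<close>.
  Because \<open>r\<close> has finite support and the columns of \<open>U\<close> are orthonormal, \<open>U\<close> acts on \<open>r\<^sup>*\<close>
  as an isometry, so \<open>\<parallel>w\<parallel> = \<parallel>r\<parallel> = 1\<close>. But the diagonal entry of \<open>w\<close> is already \<open>\<parallel>r\<parallel>\<^sup>2 = 1\<close>,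
  so all other entries of \<open>w\<close> vanish. Conversely, the diagonal of \<open>U U\<^sup>* = I\<close> says
  that every row has norm 1.\<close>

definition row_support :: "imat \<Rightarrow> nat \<Rightarrow> nat set" where
  "row_support U i = {j\<in>pos_idx. U i j \<noteq> 0}"

definition col_support :: "imat \<Rightarrow> nat \<Rightarrow> nat set" where
  "col_support U j = {i\<in>pos_idx. U i j \<noteq> 0}"

lemma finite_row_support: "row_finite U \<Longrightarrow> i \<in> pos_idx \<Longrightarrow> finite (row_support U i)"
  by (simp add: row_finite_def row_support_def)

lemma finite_col_support: "col_finite U \<Longrightarrow> j \<in> pos_idx \<Longrightarrow> finite (col_support U j)"
  by (simp add: col_finite_def col_support_def)

lemma imat_mult_eq_sum:
  assumes "finite K" "K \<subseteq> pos_idx" "\<And>k. k \<in> pos_idx - K \<Longrightarrow> X i k * Y k j = 0"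
  shows "imat_mult X Y i j = (\<Sum>k\<in>K. X i k * Y k j)"
  unfolding imat_mult_def by (rule infsumI[OF has_sum_finite_neutralI]) (use assms in auto)

lemma imat_mult_adj_right_eq_sum:
  assumes "row_finite U" "i \<in> pos_idx"
  shows "imat_mult U (imat_adj U) k i = (\<Sum>j\<in>row_support U i. U k j * cnj (U i j))"
  unfolding imat_adj_def
  by (rule imat_mult_eq_sum) (use finite_row_support[OF assms] in \<open>auto simp: row_support_def\<close>)

lemma imat_mult_adj_left_eq_sum:
  assumes "finite M" "col_support U j \<subseteq> M" "M \<subseteq> pos_idx"
  shows "imat_mult (imat_adj U) U j j' = (\<Sum>k\<in>M. cnj (U k j) * U k j')"
  unfolding imat_adj_def
  by (rule imat_mult_eq_sum) (use assms in \<open>auto simp: col_support_def\<close>)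

lemma sum_cnj_mult_self: "(\<Sum>x\<in>A. cnj (f x) * f x) = complex_of_real (\<Sum>x\<in>A. (cmod (f x))\<^sup>2)"
  by (simp only: of_real_sum complex_norm_square mult.commute)

lemma row_norm_sq:
  assumes "row_finite U" "i \<in> pos_idx"
  shows "(row_norm U i)\<^sup>2 = (\<Sum>j\<in>row_support U i. (cmod (U i j))\<^sup>2)"
proof -
  have "(\<Sum>\<^sub>\<infinity>j\<in>pos_idx. (cmod (U i j))\<^sup>2) = (\<Sum>j\<in>row_support U i. (cmod (U i j))\<^sup>2)"
    by (rule infsumI[OF has_sum_finite_neutralI])
       (use finite_row_support[OF assms] in \<open>auto simp: row_support_def\<close>)
  then show ?thesis
    by (simp add: row_norm_def sum_nonneg)
qed

lemma imat_mult_adj_diag: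
  assumes "row_finite U" "i \<in> pos_idx"
  shows "imat_mult U (imat_adj U) i i = complex_of_real ((row_norm U i)\<^sup>2)"
  using sum_cnj_mult_self[of "\<lambda>j. U i j" "row_support U i"]
  by (simp add: imat_mult_adj_right_eq_sum row_norm_sq assms mult.commute)

lemma imat_mult_adj_diag_eq_1_iff:
  assumes "row_finite U" "i \<in> pos_idx"
  shows "imat_mult U (imat_adj U) i i = 1 \<longleftrightarrow> row_norm U i = 1"
proof -
  have "row_norm U i \<ge> 0"
    by (simp add: row_norm_def infsum_nonneg)
  moreover have "imat_mult U (imat_adj U) i i = 1 \<longleftrightarrow> (row_norm U i)\<^sup>2 = 1"
    unfolding imat_mult_adj_diag[OF assms] by (rule of_real_eq_1_iff)
  ultimately show ?thesis
    by (auto simp: power2_eq_1_iff)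
qed

lemma isometry_of_orthonormal_columns:
  fixes A :: "'a \<Rightarrow> 'b \<Rightarrow> complex"
  assumes "finite J"
    and orth: "\<And>j j'. j \<in> J \<Longrightarrow> j' \<in> J \<Longrightarrow>
                 (\<Sum>k\<in>M. cnj (A k j) * A k j') = (if j = j' then 1 else 0)"
  shows "(\<Sum>k\<in>M. (cmod (\<Sum>j\<in>J. A k j * x j))\<^sup>2) = (\<Sum>j\<in>J. (cmod (x j))\<^sup>2)"
proof -
  have "complex_of_real (\<Sum>k\<in>M. (cmod (\<Sum>j\<in>J. A k j * x j))\<^sup>2)
      = (\<Sum>k\<in>M. cnj (\<Sum>j\<in>J. A k j * x j) * (\<Sum>j'\<in>J. A k j' * x j'))"
    by (rule sum_cnj_mult_self[symmetric])
  also have "\<dots> = (\<Sum>j\<in>J. \<Sum>j'\<in>J. cnj (x j) * x j' * (\<Sum>k\<in>M. cnj (A k j) * A k j'))"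
    by (simp add: sum_distrib_left sum_distrib_right sum.swap[of _ M] mult_ac)
  also have "\<dots> = (\<Sum>j\<in>J. cnj (x j) * x j)"
    using \<open>finite J\<close> by (simp add: orth if_distrib[where f="\<lambda>c. _ * c"] cong: if_cong)
  also have "\<dots> = complex_of_real (\<Sum>j\<in>J. (cmod (x j))\<^sup>2)"
    by (rule sum_cnj_mult_self)
  finally show ?thesis
    by (simp only: of_real_eq_iff)
qed

lemma imat_mult_adj_col_eq_id:
  assumes rf: "row_finite U" and cf: "col_finite U"
    and cols: "imat_eq (imat_mult (imat_adj U) U) imat_id"
    and i: "i \<in> pos_idx" and norm: "row_norm U i = 1"
    and m: "m \<in> pos_idx"
  shows "imat_mult U (imat_adj U) m i = imat_id m i"
proof -
  define J where "J = row_support U i"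
  define M where "M = insert i (\<Union>j\<in>J. col_support U j)"
  define w where "w k = imat_mult U (imat_adj U) k i" for k
  have J: "finite J" "J \<subseteq> pos_idx"
    using finite_row_support[OF rf i] by (auto simp: J_def row_support_def)
  have M: "finite M" "M \<subseteq> pos_idx" "i \<in> M"
    using J finite_col_support[OF cf] i by (auto simp: M_def col_support_def)
  have w_sum: "w k = (\<Sum>j\<in>J. U k j * cnj (U i j))" for k
    by (simp add: w_def J_def imat_mult_adj_right_eq_sum[OF rf i])
  have w_i: "w i = 1"
    by (simp add: w_def imat_mult_adj_diag[OF rf i] norm)
  have w_outside: "w k = 0" if "k \<in> pos_idx - M" for k
    unfolding w_sum using that by (intro sum.neutral) (auto simp: M_def col_support_def)
  have col_orth: "(\<Sum>k\<in>M. cnj (U k j) * U k j') = (if j = j' then 1 else 0)"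
    if "j \<in> J" "j' \<in> J" for j j'
  proof -
    have "col_support U j \<subseteq> M" using that by (auto simp: M_def)
    then have "(\<Sum>k\<in>M. cnj (U k j) * U k j') = imat_mult (imat_adj U) U j j'"
      using M by (simp add: imat_mult_adj_left_eq_sum)
    also have "\<dots> = (if j = j' then 1 else 0)"
      using cols that J(2) unfolding imat_eq_def imat_id_def by blast
    finally show ?thesis .
  qed
  have "(\<Sum>k\<in>M. (cmod (w k))\<^sup>2) = (\<Sum>j\<in>J. (cmod (cnj (U i j)))\<^sup>2)"
    unfolding w_sum by (rule isometry_of_orthonormal_columns[OF J(1) col_orth])
  also have "\<dots> = 1"
    using row_norm_sq[OF rf i] by (simp add: J_def norm)
  finally have "(\<Sum>k\<in>M - {i}. (cmod (w k))\<^sup>2) = 0"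
    using M w_i by (simp add: sum.remove)
  then have w_M: "w k = 0" if "k \<in> M - {i}" for k
    using M that by (simp add: sum_nonneg_eq_0_iff)
  show ?thesis
    using w_i w_M w_outside m by (cases "m \<in> M") (auto simp: w_def imat_id_def)
qed

theorem lemma4:
  fixes U :: imat
  assumes "row_finite U" and "col_finite U"
  shows "unitary U \<longleftrightarrow>
           (imat_eq (imat_mult (imat_adj U) U) imat_id \<and> (\<forall>i\<in>pos_idx. row_norm U i = 1))"
proof
  assume "unitary U"
  then show "imat_eq (imat_mult (imat_adj U) U) imat_id \<and> (\<forall>i\<in>pos_idx. row_norm U i = 1)"
    using imat_mult_adj_diag_eq_1_iff[OF assms(1)]
    by (auto simp: unitary_def imat_eq_def imat_id_def)
next
  assume "imat_eq (imat_mult (imat_adj U) U) imat_id \<and> (\<forall>i\<in>pos_idx. row_norm U i = 1)"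
  then show "unitary U"
    using imat_mult_adj_col_eq_id[OF assms] by (auto simp: unitary_def imat_eq_def)
qed

end
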